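(* Let $G=A(n,\theta)$ with $n=2m+1\ge3$ odd, and let $C$ be a union of conjugacy classes of elements of order $4$ containing, for each conjugacy class $K$ of elements of order $4$, exactly one of $K$ and $K^{(-1)}$. Then every linear character $\lambda$ of $G$ satisfies $\lambda(C)-\overline{\lambda(C)}=0$, and for every nonlinear irreducible character $\chi$ of $G$, $\frac{\chi(C)-\overline{\chi(C)}}{\chi(1)}\in\{2^n i,-2^n i\}$. Consequently the skew adjacency matrix of $\mathrm{Cay}(G,C)$ has all its eigenvalues in $\{0,\,2^n i,\,-2^n i\}$.
   Context: Let $\mathbb{F}_{2^n}$ be the field with $2^n$ elements, $\theta$ a generator of $\mathrm{Gal}(\mathbb{F}_{2^n}/\mathbb{F}_2)$, $a^\theta$ the image of $a$ under $\theta$. $G=A(n,\theta)$ is the group of matrices $\begin{bmatrix}1&a&b\\0&1&a^\theta\\0&0&1\end{bmatrix}$, $a,b\in\mathbb{F}_{2^n}$, denoted $(a,b)$, with $(a,b)(c,d)=(a+c,\,b+d+ac^\theta)$. For $Y\subseteq G$, $Y^{(-1)}=\{y^{-1}:y\in Y\}$ and $\chi(Y)=\sum_{y\in Y}\chi(y)$. The Cayley digraph $\mathrm{Cay}(G,C)$ has vertex set $G$ and an arc from $g$ to $cg$ for each $c\in C$; its skew adjacency matrix $S$ has $(u,v)$ entry $1$ if $(u,v)$ is an arc, $-1$ if $(v,u)$ is an arc, $0$ otherwise. *)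

theory Defs
  imports "HOL-Algebra.Multiplicative_Group" "Jordan_Normal_Form.Matrix"
begin

definition field_aut :: "('a::field \<Rightarrow> 'a) \<Rightarrow> bool" where
  "field_aut \<sigma> \<longleftrightarrow> bij \<sigma> \<and> (\<forall>x y. \<sigma> (x + y) = \<sigma> x + \<sigma> y)
     \<and> (\<forall>x y. \<sigma> (x * y) = \<sigma> x * \<sigma> y) \<and> \<sigma> 1 = 1"

definition gal_generator :: "('a::field \<Rightarrow> 'a) \<Rightarrow> bool" where
  "gal_generator \<theta> \<longleftrightarrow> field_aut \<theta> \<and> (\<forall>\<sigma>. field_aut \<sigma> \<longrightarrow> (\<exists>k::nat. \<sigma> = (\<theta> ^^ k)))"

definition A_grp :: "('a::field \<Rightarrow> 'a) \<Rightarrow> ('a \<times> 'a) monoid" where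
  "A_grp \<theta> = \<lparr>carrier = UNIV,
                monoid.mult = (\<lambda>(a, b) (c, d). (a + c, b + d + a * \<theta> c)),
                monoid.one = (0, 0)\<rparr>"

definition conj_class :: "('g, 'b) monoid_scheme \<Rightarrow> 'g \<Rightarrow> 'g set" where
  "conj_class G g = {inv\<^bsub>G\<^esub> h \<otimes>\<^bsub>G\<^esub> g \<otimes>\<^bsub>G\<^esub> h | h. h \<in> carrier G}"

definition is_rep :: "('g, 'b) monoid_scheme \<Rightarrow> nat \<Rightarrow> ('g \<Rightarrow> complex mat) \<Rightarrow> bool" where
  "is_rep G d \<rho> \<longleftrightarrow> (\<forall>g\<in>carrier G. \<rho> g \<in> carrier_mat d d)
     \<and> (\<forall>g\<in>carrier G. \<forall>h\<in>carrier G. \<rho> (g \<otimes>\<^bsub>G\<^esub> h) = \<rho> g * \<rho> h)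
     \<and> \<rho> \<one>\<^bsub>G\<^esub> = 1\<^sub>m d"

definition irreducible_rep :: "('g, 'b) monoid_scheme \<Rightarrow> nat \<Rightarrow> ('g \<Rightarrow> complex mat) \<Rightarrow> bool" where
  "irreducible_rep G d \<rho> \<longleftrightarrow> is_rep G d \<rho> \<and> d > 0 \<and>
     \<not> (\<exists>W. W \<subseteq> carrier_vec d \<and> 0\<^sub>v d \<in> W
            \<and> (\<forall>v\<in>W. \<forall>w\<in>W. v + w \<in> W)
            \<and> (\<forall>c. \<forall>v\<in>W. c \<cdot>\<^sub>v v \<in> W)
            \<and> (\<forall>g\<in>carrier G. \<forall>v\<in>W. \<rho> g *\<^sub>v v \<in> W)
            \<and> W \<noteq> {0\<^sub>v d} \<and> W \<noteq> carrier_vec d)"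

definition mat_trace :: "complex mat \<Rightarrow> complex" where
  "mat_trace A = (\<Sum>i<dim_row A. A $$ (i, i))"

definition irr_char :: "('g, 'b) monoid_scheme \<Rightarrow> ('g \<Rightarrow> complex) \<Rightarrow> bool" where
  "irr_char G \<chi> \<longleftrightarrow> (\<exists>d \<rho>. irreducible_rep G d \<rho> \<and> (\<forall>g\<in>carrier G. \<chi> g = mat_trace (\<rho> g)))"

definition linear_char :: "('g, 'b) monoid_scheme \<Rightarrow> ('g \<Rightarrow> complex) \<Rightarrow> bool" where
  "linear_char G \<chi> \<longleftrightarrow> (\<exists>\<rho>. is_rep G 1 \<rho> \<and> (\<forall>g\<in>carrier G. \<chi> g = mat_trace (\<rho> g)))"

definition char_sum :: "('g \<Rightarrow> complex) \<Rightarrow> 'g set \<Rightarrow> complex" where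
  "char_sum \<chi> Y = (\<Sum>y\<in>Y. \<chi> y)"

definition cay_arc :: "('g, 'b) monoid_scheme \<Rightarrow> 'g set \<Rightarrow> 'g \<Rightarrow> 'g \<Rightarrow> bool" where
  "cay_arc G C u v \<longleftrightarrow> u \<in> carrier G \<and> v \<in> carrier G \<and> (\<exists>c\<in>C. v = c \<otimes>\<^bsub>G\<^esub> u)"

definition skew_adj :: "('g, 'b) monoid_scheme \<Rightarrow> 'g set \<Rightarrow> 'g \<Rightarrow> 'g \<Rightarrow> complex" where
  "skew_adj G C u v = (if cay_arc G C u v then 1 else if cay_arc G C v u then -1 else 0)"

definition is_eigenvalue :: "'g set \<Rightarrow> ('g \<Rightarrow> 'g \<Rightarrow> complex) \<Rightarrow> complex \<Rightarrow> bool" where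
  "is_eigenvalue I M \<mu> \<longleftrightarrow> (\<exists>f. (\<exists>u\<in>I. f u \<noteq> 0) \<and>
      (\<forall>u\<in>I. (\<Sum>v\<in>I. M u v * f v) = \<mu> * f u))"

end

(* Write N = 2^n, Z = {(0,b)} for the centre and e = C - C^(-1) for the element of the group
   algebra with coefficient function skewC.  Conjugating (a,b) by (c,0) adds c theta(a) + a theta(c)
   to b, and by additive Hilbert 90 these shifts form the hyperplane a theta(a) ker Tr; as exactly
   one of g, g^(-1) lies in C, this gives e(a,b) = e(a,0) (-1)^Tr(b / (a theta(a))).  For odd n the
   map a -> a theta(a) is injective, so orthogonality of additive characters yields
   e * e = N Z - N^2 and hence e^3 = -N^2 e.

   An irreducible representation of degree d maps the class functions 1, Z and e to scalars m1, mZ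
   and me with me^2 = N mZ - N^2, and 1_C = (1 - Z + e)/2 gives chi(C) = d (m1 - mZ + me)/2.  As Z
   is generated by commutators, linear characters have mZ = N and hence me = 0, while for the
   others m1 = mZ = 0 and so me = +-N i.  Finally, the skew adjacency matrix acts as convolution by
   -e, so each of its eigenvalues mu satisfies mu^3 = -N^2 mu. *)

theory Submission
  imports Defs "HOL-Library.Indicator_Function" "HOL-Number_Theory.Residues"
    "Jordan_Normal_Form.Spectral_Radius"
begin

section \<open>Group algebras and representations of finite groups\<close>

text \<open>Functions \<open>'g \<Rightarrow> complex\<close> stand for elements of the group algebra: convolution is
  its product and \<open>rep_sum\<close> is the linear extension of a representation to it.\<close>

definition convolution :: "('g, 'b) monoid_scheme \<Rightarrow> ('g \<Rightarrow> complex) \<Rightarrow> ('g \<Rightarrow> complex) \<Rightarrow> 'g \<Rightarrow> complex"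
  where "convolution G f h k = (\<Sum>x\<in>carrier G. f x * h (inv\<^bsub>G\<^esub> x \<otimes>\<^bsub>G\<^esub> k))"

definition rep_sum :: "('g, 'b) monoid_scheme \<Rightarrow> nat \<Rightarrow> ('g \<Rightarrow> complex mat) \<Rightarrow> ('g \<Rightarrow> complex) \<Rightarrow> complex mat"
  where "rep_sum G d \<rho> f = mat d d (\<lambda>(i, j). \<Sum>g\<in>carrier G. f g * \<rho> g $$ (i, j))"

lemma (in group) mult_inv_cancel_left [simp]:
  "x \<in> carrier G \<Longrightarrow> y \<in> carrier G \<Longrightarrow> x \<otimes> (inv x \<otimes> y) = y"
  by (simp flip: m_assoc)

lemma (in group) inv_mult_cancel_left [simp]:
  "x \<in> carrier G \<Longrightarrow> y \<in> carrier G \<Longrightarrow> inv x \<otimes> (x \<otimes> y) = y"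
  by (simp flip: m_assoc)

lemma (in group) conj_class_self: "g \<in> carrier G \<Longrightarrow> g \<in> conj_class G g"
  unfolding conj_class_def by (rule CollectI, rule exI[of _ \<one>]) simp

lemma (in group) image_inv_conj_class:
  assumes "g \<in> carrier G"
  shows "(\<lambda>y. inv y) ` conj_class G g = conj_class G (inv g)"
proof -
  have "conj_class G x = (\<lambda>h. inv h \<otimes> x \<otimes> h) ` carrier G" for x
    unfolding conj_class_def by blast
  then show ?thesis
    using assms by (simp add: image_image inv_mult_group m_assoc cong: image_cong)
qed

lemma (in group) conj_class_subset_iff:
  assumes "\<forall>x\<in>C. conj_class G x \<subseteq> C" and "g \<in> carrier G"
  shows "conj_class G g \<subseteq> C \<longleftrightarrow> g \<in> C"
  using assms conj_class_self by blast

locale finite_group = group G for G (structure) +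
  assumes finite_carrier: "finite (carrier G)"
begin

lemma convolution_assoc:
  assumes "k \<in> carrier G"
  shows "convolution G (convolution G f g) h k = convolution G f (convolution G g h) k"
proof -
  have "convolution G (convolution G f g) h k
      = (\<Sum>y\<in>carrier G. \<Sum>x\<in>carrier G. f y * g (inv y \<otimes> x) * h (inv x \<otimes> k))"
    unfolding convolution_def sum_distrib_right by (rule sum.swap)
  also have "\<dots> = (\<Sum>y\<in>carrier G. \<Sum>z\<in>carrier G. f y * g z * h (inv z \<otimes> (inv y \<otimes> k)))"
  proof (rule sum.cong[OF refl])
    fix y assume y: "y \<in> carrier G"
    show "(\<Sum>x\<in>carrier G. f y * g (inv y \<otimes> x) * h (inv x \<otimes> k))
        = (\<Sum>z\<in>carrier G. f y * g z * h (inv z \<otimes> (inv y \<otimes> k)))"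
      by (rule sum.reindex_bij_witness[of _ "\<lambda>z. y \<otimes> z" "\<lambda>x. inv y \<otimes> x"])
         (use y assms in \<open>auto simp: m_assoc inv_mult_group\<close>)
  qed
  also have "\<dots> = convolution G f (convolution G g h) k"
    using assms by (simp add: convolution_def sum_distrib_left mult.assoc)
  finally show ?thesis .
qed

lemma convolution_linear_left:
  "convolution G (\<lambda>x. a * f x + b * g x) h k = a * convolution G f h k + b * convolution G g h k"
  by (simp add: convolution_def sum.distrib sum_distrib_left algebra_simps)

lemma convolution_scale_left:
  "convolution G (\<lambda>x. c * f x) h = (\<lambda>k. c * convolution G f h k)"
  by (rule ext) (simp add: convolution_def sum_distrib_left mult_ac)

lemma convolution_scale_right:
  "convolution G f (\<lambda>x. c * h x) = (\<lambda>k. c * convolution G f h k)"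
  by (rule ext) (simp add: convolution_def sum_distrib_left mult_ac)

lemma convolution_indicator_one:
  assumes "k \<in> carrier G"
  shows "convolution G (indicator {\<one>}) f k = f k"
  using assms finite_carrier by (simp add: convolution_def indicator_def if_distrib cong: if_cong)

lemma sum_right_translate_eq_convolution:
  assumes "u \<in> carrier G"
  shows "(\<Sum>v\<in>carrier G. h (v \<otimes> inv u) * f v) = convolution G (\<lambda>x. h (inv x)) f u"
  unfolding convolution_def
  by (rule sum.reindex_bij_witness[of _ "\<lambda>x. inv x \<otimes> u" "\<lambda>v. u \<otimes> inv v"])
     (use assms in \<open>auto simp: m_assoc inv_mult_group\<close>)

end

lemma mat_mult_index:
  assumes "A \<in> carrier_mat d d" "B \<in> carrier_mat d d" "i < d" "j < d"
  shows "(A * B) $$ (i, j) = (\<Sum>l\<in>{0..<d}. A $$ (i, l) * B $$ (l, j))"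
  using assms by (simp add: scalar_prod_def)

locale finite_group_rep = finite_group +
  fixes d :: nat and \<rho>
  assumes is_rep: "is_rep G d \<rho>"
begin

lemma rep_carrier: "g \<in> carrier G \<Longrightarrow> \<rho> g \<in> carrier_mat d d"
  using is_rep unfolding is_rep_def by blast

lemma rep_mult: "g \<in> carrier G \<Longrightarrow> h \<in> carrier G \<Longrightarrow> \<rho> (g \<otimes> h) = \<rho> g * \<rho> h"
  using is_rep unfolding is_rep_def by blast

lemma rep_one: "\<rho> \<one> = 1\<^sub>m d"
  using is_rep unfolding is_rep_def by blast

lemma rep_dim: "g \<in> carrier G \<Longrightarrow> dim_row (\<rho> g) = d" "g \<in> carrier G \<Longrightarrow> dim_col (\<rho> g) = d"
  using rep_carrier by auto

lemma rep_cancel_left: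
  assumes "g \<in> carrier G" "A \<in> carrier_mat d d" "B \<in> carrier_mat d d" "\<rho> g * A = \<rho> g * B"
  shows "A = B"
proof -
  have inv_rep: "\<rho> (inv g) * \<rho> g = 1\<^sub>m d"
    using assms(1) by (simp flip: rep_mult rep_one)
  have "A = \<rho> (inv g) * \<rho> g * A" using assms(2) by (simp add: inv_rep)
  also have "\<dots> = \<rho> (inv g) * \<rho> g * B"
    using assms by (simp add: assoc_mult_mat[of _ d d _ d _ d] rep_carrier)
  also have "\<dots> = B" using assms(3) by (simp add: inv_rep)
  finally show ?thesis .
qed

lemma rep_sum_carrier [simp]: "rep_sum G d \<rho> f \<in> carrier_mat d d"
  by (simp add: rep_sum_def)

lemma rep_sum_index:
  "i < d \<Longrightarrow> j < d \<Longrightarrow> rep_sum G d \<rho> f $$ (i, j) = (\<Sum>g\<in>carrier G. f g * \<rho> g $$ (i, j))"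
  by (simp add: rep_sum_def)

lemma rep_sum_cong: "(\<And>g. g \<in> carrier G \<Longrightarrow> f g = f' g) \<Longrightarrow> rep_sum G d \<rho> f = rep_sum G d \<rho> f'"
  unfolding rep_sum_def by (intro cong_mat refl sum.cong) auto

lemma rep_mult_rep_sum:
  assumes g: "g \<in> carrier G"
  shows "\<rho> g * rep_sum G d \<rho> f = rep_sum G d \<rho> (\<lambda>k. f (inv g \<otimes> k))"
proof (rule eq_matI)
  fix i j assume "i < dim_row (rep_sum G d \<rho> (\<lambda>k. f (inv g \<otimes> k)))"
    and "j < dim_col (rep_sum G d \<rho> (\<lambda>k. f (inv g \<otimes> k)))"
  then have ij: "i < d" "j < d" by (simp_all add: rep_sum_def)
  have "(\<rho> g * rep_sum G d \<rho> f) $$ (i, j) = (\<Sum>k\<in>carrier G. f k * (\<rho> g * \<rho> k) $$ (i, j))"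
    using ij g rep_carrier
    by (simp add: mat_mult_index[where d = d] rep_sum_index sum_distrib_left mult_ac sum.swap[of _ "{0..<d}"])
  also have "\<dots> = (\<Sum>k\<in>carrier G. f (inv g \<otimes> k) * \<rho> k $$ (i, j))"
    by (rule sum.reindex_bij_witness[of _ "\<lambda>k. inv g \<otimes> k" "\<lambda>k. g \<otimes> k"])
       (use g in \<open>auto simp: rep_mult m_assoc\<close>)
  finally show "(\<rho> g * rep_sum G d \<rho> f) $$ (i, j) = rep_sum G d \<rho> (\<lambda>k. f (inv g \<otimes> k)) $$ (i, j)"
    using ij by (simp add: rep_sum_index)
qed (use rep_carrier[OF g] in \<open>simp_all add: rep_sum_def\<close>)

lemma rep_sum_mult_rep:
  assumes g: "g \<in> carrier G"
  shows "rep_sum G d \<rho> f * \<rho> g = rep_sum G d \<rho> (\<lambda>k. f (k \<otimes> inv g))"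
proof (rule eq_matI)
  fix i j assume "i < dim_row (rep_sum G d \<rho> (\<lambda>k. f (k \<otimes> inv g)))"
    and "j < dim_col (rep_sum G d \<rho> (\<lambda>k. f (k \<otimes> inv g)))"
  then have ij: "i < d" "j < d" by (simp_all add: rep_sum_def)
  have "(rep_sum G d \<rho> f * \<rho> g) $$ (i, j) = (\<Sum>k\<in>carrier G. f k * (\<rho> k * \<rho> g) $$ (i, j))"
    using ij g rep_carrier
    by (simp add: mat_mult_index[where d = d] rep_sum_index sum_distrib_left sum_distrib_right mult_ac
        sum.swap[of _ "{0..<d}"])
  also have "\<dots> = (\<Sum>k\<in>carrier G. f (k \<otimes> inv g) * \<rho> k $$ (i, j))"
    by (rule sum.reindex_bij_witness[of _ "\<lambda>k. k \<otimes> inv g" "\<lambda>k. k \<otimes> g"])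
       (use g in \<open>auto simp: rep_mult m_assoc\<close>)
  finally show "(rep_sum G d \<rho> f * \<rho> g) $$ (i, j) = rep_sum G d \<rho> (\<lambda>k. f (k \<otimes> inv g)) $$ (i, j)"
    using ij by (simp add: rep_sum_index)
qed (use rep_carrier[OF g] in \<open>simp_all add: rep_sum_def\<close>)

lemma rep_sum_convolution:
  "rep_sum G d \<rho> (convolution G f h) = rep_sum G d \<rho> f * rep_sum G d \<rho> h"
proof (rule eq_matI)
  fix i j assume "i < dim_row (rep_sum G d \<rho> f * rep_sum G d \<rho> h)"
    and "j < dim_col (rep_sum G d \<rho> f * rep_sum G d \<rho> h)"
  then have ij: "i < d" "j < d" by (simp_all add: rep_sum_def)
  have "(rep_sum G d \<rho> f * rep_sum G d \<rho> h) $$ (i, j)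
      = (\<Sum>l\<in>{0..<d}. \<Sum>g\<in>carrier G. f g * (\<rho> g $$ (i, l) * rep_sum G d \<rho> h $$ (l, j)))"
    using ij by (simp add: mat_mult_index[where d = d] rep_sum_index sum_distrib_right mult.assoc)
  also have "\<dots> = (\<Sum>g\<in>carrier G. f g * (\<rho> g * rep_sum G d \<rho> h) $$ (i, j))"
    using ij rep_carrier by (subst sum.swap) (simp add: mat_mult_index[where d = d] sum_distrib_left)
  also have "\<dots> = (\<Sum>g\<in>carrier G. f g * (\<Sum>k\<in>carrier G. h (inv g \<otimes> k) * \<rho> k $$ (i, j)))"
    using ij by (simp add: rep_mult_rep_sum rep_sum_index)
  also have "\<dots> = (\<Sum>k\<in>carrier G. \<Sum>g\<in>carrier G. f g * h (inv g \<otimes> k) * \<rho> k $$ (i, j))"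
    by (simp add: sum_distrib_left mult.assoc) (rule sum.swap)
  also have "\<dots> = rep_sum G d \<rho> (convolution G f h) $$ (i, j)"
    using ij by (simp add: rep_sum_index convolution_def sum_distrib_right)
  finally show "rep_sum G d \<rho> (convolution G f h) $$ (i, j)
      = (rep_sum G d \<rho> f * rep_sum G d \<rho> h) $$ (i, j)" ..
qed (simp_all add: rep_sum_def)

lemma rep_sum_class_function_commute:
  assumes class_fun: "\<And>x y. x \<in> carrier G \<Longrightarrow> y \<in> carrier G \<Longrightarrow> f (x \<otimes> y) = f (y \<otimes> x)"
    and g: "g \<in> carrier G"
  shows "\<rho> g * rep_sum G d \<rho> f = rep_sum G d \<rho> f * \<rho> g"
  using g by (simp add: rep_mult_rep_sum rep_sum_mult_rep class_fun cong: rep_sum_cong)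

lemma trace_rep_sum:
  "mat_trace (rep_sum G d \<rho> f) = (\<Sum>g\<in>carrier G. f g * mat_trace (\<rho> g))"
proof -
  have "mat_trace (rep_sum G d \<rho> f) = (\<Sum>g\<in>carrier G. \<Sum>i<d. f g * \<rho> g $$ (i, i))"
    by (simp add: mat_trace_def rep_sum_def sum.swap[of _ "{..<d}"])
  also have "\<dots> = (\<Sum>g\<in>carrier G. f g * mat_trace (\<rho> g))"
    by (simp add: mat_trace_def sum_distrib_left rep_dim cong: sum.cong)
  finally show ?thesis .
qed

lemma trace_rep_sum_scalar:
  "rep_sum G d \<rho> f = m \<cdot>\<^sub>m 1\<^sub>m d \<Longrightarrow> (\<Sum>g\<in>carrier G. f g * mat_trace (\<rho> g)) = of_nat d * m"
  using trace_rep_sum[of f] by (simp add: mat_trace_def)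

lemma rep_sum_convolution_scalar:
  assumes "rep_sum G d \<rho> f = a \<cdot>\<^sub>m 1\<^sub>m d" and "rep_sum G d \<rho> h = b \<cdot>\<^sub>m 1\<^sub>m d"
  shows "rep_sum G d \<rho> (convolution G f h) = (a * b) \<cdot>\<^sub>m 1\<^sub>m d"
  using assms by (auto simp: rep_sum_convolution intro!: eq_matI)

lemma rep_trivial_if_invariant:
  assumes "rep_sum G d \<rho> f = m \<cdot>\<^sub>m 1\<^sub>m d" "m \<noteq> 0" "g \<in> carrier G"
    and "\<And>k. k \<in> carrier G \<Longrightarrow> f (inv g \<otimes> k) = f k"
  shows "\<rho> g = 1\<^sub>m d"
proof -
  have "\<rho> g * rep_sum G d \<rho> f = rep_sum G d \<rho> f"
    using assms(3,4) by (simp add: rep_mult_rep_sum cong: rep_sum_cong)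
  then have scaled: "m \<cdot>\<^sub>m \<rho> g = m \<cdot>\<^sub>m 1\<^sub>m d"
    using assms(1) mult_smult_distrib[OF rep_carrier[OF assms(3)] one_carrier_mat] rep_carrier[OF assms(3)]
    by simp
  have "m * \<rho> g $$ (i, j) = m * 1\<^sub>m d $$ (i, j)" if "i < d" "j < d" for i j
  proof -
    have "m * \<rho> g $$ (i, j) = (m \<cdot>\<^sub>m \<rho> g) $$ (i, j)"
      using that rep_dim[OF assms(3)] by simp
    also have "\<dots> = m * 1\<^sub>m d $$ (i, j)"
      using that by (simp add: scaled)
    finally show ?thesis .
  qed
  then show ?thesis
    using assms(2) rep_dim[OF assms(3)] by (intro eq_matI) auto
qed

end

lemma schur_scalar:
  assumes irr: "irreducible_rep G d \<rho>" and M: "M \<in> carrier_mat d d"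
    and comm: "\<And>g. g \<in> carrier G \<Longrightarrow> \<rho> g * M = M * \<rho> g"
  shows "\<exists>\<mu>. M = \<mu> \<cdot>\<^sub>m 1\<^sub>m d"
proof -
  have rep: "is_rep G d \<rho>" and "d > 0" using irr unfolding irreducible_rep_def by auto
  have rep_carrier: "\<And>g. g \<in> carrier G \<Longrightarrow> \<rho> g \<in> carrier_mat d d"
    using rep unfolding is_rep_def by auto
  obtain \<mu> where "eigenvalue M \<mu>"
    using spectrum_non_empty[OF M \<open>d > 0\<close>] unfolding spectrum_def by auto
  then obtain v where v: "v \<in> carrier_vec d" "v \<noteq> 0\<^sub>v d" "M *\<^sub>v v = \<mu> \<cdot>\<^sub>v v"
    using M unfolding eigenvalue_def eigenvector_def by auto
  define W where "W = {w \<in> carrier_vec d. M *\<^sub>v w = \<mu> \<cdot>\<^sub>v w}"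
  have "\<rho> g *\<^sub>v w \<in> W" if "g \<in> carrier G" "w \<in> W" for g w
  proof -
    have w: "w \<in> carrier_vec d" "M *\<^sub>v w = \<mu> \<cdot>\<^sub>v w" using that(2) unfolding W_def by auto
    have "M *\<^sub>v (\<rho> g *\<^sub>v w) = \<rho> g *\<^sub>v (M *\<^sub>v w)"
      using M rep_carrier[OF that(1)] w(1) comm[OF that(1)] by (simp flip: assoc_mult_mat_vec)
    also have "\<dots> = \<mu> \<cdot>\<^sub>v (\<rho> g *\<^sub>v w)"
      using rep_carrier[OF that(1)] w by (simp add: mult_mat_vec)
    finally show ?thesis unfolding W_def using rep_carrier[OF that(1)] w(1) by auto
  qed
  moreover have "W \<subseteq> carrier_vec d" "0\<^sub>v d \<in> W" "\<forall>x\<in>W. \<forall>y\<in>W. x + y \<in> W"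
      "\<forall>c. \<forall>x\<in>W. c \<cdot>\<^sub>v x \<in> W" "W \<noteq> {0\<^sub>v d}"
    using M v unfolding W_def
    by (auto simp: mult_add_distrib_mat_vec smult_add_distrib_vec mult_mat_vec smult_smult_assoc
        mult.commute)
  ultimately have "W = carrier_vec d"
    using irr unfolding irreducible_rep_def by blast
  then have unit: "M *\<^sub>v unit_vec d j = \<mu> \<cdot>\<^sub>v unit_vec d j" for j
    using unit_vec_carrier[of d j] unfolding W_def by blast
  have "M $$ (i, j) = (\<mu> \<cdot>\<^sub>m 1\<^sub>m d) $$ (i, j)" if "i < d" "j < d" for i j
  proof -
    have "M $$ (i, j) = (M *\<^sub>v unit_vec d j) $ i"
      using that carrier_matD[OF M] by simp
    then show ?thesis
      using that unfolding unit by simp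
  qed
  then have "M = \<mu> \<cdot>\<^sub>m 1\<^sub>m d"
    using carrier_matD[OF M] by (intro eq_matI) auto
  then show ?thesis ..
qed

lemma scalar_mat_mult_vec: "v \<in> carrier_vec d \<Longrightarrow> (a \<cdot>\<^sub>m 1\<^sub>m d) *\<^sub>v v = (a::complex) \<cdot>\<^sub>v v"
  by (intro eq_vecI) (auto simp: row_smult)

lemma irreducible_commutative_dim_one:
  assumes irr: "irreducible_rep G d \<rho>"
    and comm: "\<And>g h. g \<in> carrier G \<Longrightarrow> h \<in> carrier G \<Longrightarrow> \<rho> g * \<rho> h = \<rho> h * \<rho> g"
  shows "d = 1"
proof (rule ccontr)
  assume "d \<noteq> 1"
  moreover have rep: "is_rep G d \<rho>" and "d > 0" using irr unfolding irreducible_rep_def by auto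
  ultimately have "1 < d" by linarith
  have rep_carrier: "\<And>g. g \<in> carrier G \<Longrightarrow> \<rho> g \<in> carrier_mat d d"
    using rep unfolding is_rep_def by auto
  define W :: "complex vec set" where "W = {v \<in> carrier_vec d. v $ 0 = 0}"
  have "\<rho> g *\<^sub>v v \<in> W" if g: "g \<in> carrier G" and v: "v \<in> W" for g v
  proof -
    obtain \<mu> where "\<rho> g = \<mu> \<cdot>\<^sub>m 1\<^sub>m d"
      using schur_scalar[OF irr rep_carrier[OF g]] comm g by blast
    then show ?thesis
      using v \<open>d > 0\<close> unfolding W_def by (auto simp: scalar_mat_mult_vec)
  qed
  moreover have "W \<subseteq> carrier_vec d" "0\<^sub>v d \<in> W" "\<forall>x\<in>W. \<forall>y\<in>W. x + y \<in> W"
      "\<forall>c. \<forall>x\<in>W. c \<cdot>\<^sub>v x \<in> W"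
    using \<open>d > 0\<close> unfolding W_def by auto
  moreover have "unit_vec d 1 \<in> W" "unit_vec d 0 \<notin> W"
    using \<open>1 < d\<close> unfolding W_def by auto
  then have "W \<noteq> {0\<^sub>v d}" "W \<noteq> carrier_vec d"
    using \<open>1 < d\<close> by (auto simp: unit_vec_nonzero)
  ultimately show False
    using irr unfolding irreducible_rep_def by blast
qed

lemma mat_1x1_scalar: "(M::complex mat) \<in> carrier_mat 1 1 \<Longrightarrow> M = M $$ (0, 0) \<cdot>\<^sub>m 1\<^sub>m 1"
  by (intro eq_matI) auto

lemma mat_1x1_mult_commute:
  "(A::complex mat) \<in> carrier_mat 1 1 \<Longrightarrow> B \<in> carrier_mat 1 1 \<Longrightarrow> A * B = B * A"
  by (intro eq_matI) (auto simp: scalar_prod_def)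

lemma complex_square_eq_neg_square: "(z::complex) * z = - (a * a) \<longleftrightarrow> z = a * \<i> \<or> z = - (a * \<i>)"
proof -
  have "z * z = - (a * a) \<longleftrightarrow> z * z + a * a = 0"
    by (simp add: eq_neg_iff_add_eq_0)
  also have "\<dots> \<longleftrightarrow> (z - a * \<i>) * (z + a * \<i>) = 0"
    by (simp add: algebra_simps)
  also have "\<dots> \<longleftrightarrow> z = a * \<i> \<or> z = - (a * \<i>)"
    by (simp add: add_eq_0_iff2)
  finally show ?thesis .
qed

section \<open>Finite fields of characteristic two and odd degree\<close>

lemma square_eq_self_iff: "x ^ 2 = x \<longleftrightarrow> x = 0 \<or> x = (1::'a::idom)"
  by (metis power2_eq_square mult_cancel_left1 mult_zero_left)

locale suzuki_A =
  fixes \<theta> :: "'a::{field,finite} \<Rightarrow> 'a" and n :: nat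
  assumes card_UNIV: "card (UNIV :: 'a set) = 2 ^ n"
    and odd_n: "odd n"
    and gal_generator: "gal_generator \<theta>"
begin

sublocale \<theta>: field_hom \<theta>
proof -
  have aut: "field_aut \<theta>" using gal_generator unfolding gal_generator_def by blast
  then have "\<theta> 0 = 0" unfolding field_aut_def by (metis add_cancel_right_right add_0)
  with aut show "field_hom \<theta>" unfolding field_aut_def by unfold_locales auto
qed

lemma CHAR_eq_2: "CHAR('a) = 2"
proof -
  have "prime CHAR('a)"
    by (rule prime_CHAR_semidom) (simp add: finite_imp_CHAR_pos)
  moreover have "CHAR('a) dvd 2 ^ n"
    using CHAR_dvd_CARD[where 'a = 'a] card_UNIV by simp
  ultimately show ?thesis
    by (metis prime_dvd_power primes_dvd_imp_eq two_is_prime_nat)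
qed

lemma uminus_eq_self [simp]: "- x = (x::'a)"
  by (rule uminus_CHAR_2[OF CHAR_eq_2])

lemma diff_eq_add [simp]: "x - y = x + (y::'a)"
  by (rule minus_CHAR_2[OF CHAR_eq_2])

lemma add_self [simp]: "x + x = (0::'a)"
  by (metis diff_eq_add diff_self)

lemma two_eq_zero [simp]: "(2::'a) = 0"
  by (metis add_self one_add_one)

lemma add_self_left: "x + (x + y) = (y::'a)"
  by (simp flip: add.assoc)

lemma add_eq_0_iff_eq: "x + y = (0::'a) \<longleftrightarrow> x = y"
  by (metis add_self add_right_cancel)

lemma power_two_pow_add: "(x + y) ^ 2 ^ k = x ^ 2 ^ k + (y::'a) ^ 2 ^ k"
  by (rule freshmans_dream') (simp_all add: CHAR_eq_2)

lemma square_add: "(x + y) ^ 2 = x ^ 2 + (y::'a) ^ 2"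
  using power_two_pow_add[of x y 1] by simp

lemma field_aut_square: "field_aut (\<lambda>x::'a. x ^ 2)"
proof -
  have "inj (\<lambda>x::'a. x ^ 2)"
    by (rule injI) (metis add_eq_0_iff_eq square_add add_self zero_eq_power2)
  then have "bij (\<lambda>x::'a. x ^ 2)"
    by (simp add: bij_def finite_UNIV_inj_surj)
  then show ?thesis
    unfolding field_aut_def by (simp add: square_add power_mult_distrib)
qed

lemma fixed_point_of_\<theta>:
  assumes "\<theta> x = x"
  shows "x = 0 \<or> x = 1"
proof -
  obtain j where "(\<lambda>x::'a. x ^ 2) = \<theta> ^^ j"
    using gal_generator field_aut_square unfolding gal_generator_def by blast
  moreover have "(\<theta> ^^ k) x = x" for k
    by (induction k) (simp_all add: assms)
  ultimately have "x ^ 2 = x" by metis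
  then show ?thesis by (simp add: square_eq_self_iff)
qed

lemma power_card: "x ^ 2 ^ n = (x::'a)"
proof (cases "x = 0")
  case False
  have "x ^ card (UNIV - {0::'a}) * (\<Prod>y\<in>UNIV - {0}. y) = (\<Prod>y\<in>UNIV - {0::'a}. x * y)"
    by (simp add: prod.distrib)
  also have "\<dots> = (\<Prod>y\<in>UNIV - {0}. y)"
    by (rule prod.reindex_bij_witness[of _ "\<lambda>y. y / x" "\<lambda>y. x * y"]) (use False in auto)
  finally have "x ^ (2 ^ n - 1) = 1"
    using card_UNIV by (simp add: card_Diff_singleton)
  then have "x * x ^ (2 ^ n - 1) = x" by simp
  then show ?thesis by (simp flip: power_Suc)
qed simp

definition Tr :: "'a \<Rightarrow> 'a" where "Tr x = (\<Sum>k<n. x ^ 2 ^ k)"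

lemma Tr_add: "Tr (x + y) = Tr x + Tr y"
  by (simp add: Tr_def power_two_pow_add sum.distrib)

lemma Tr_0 [simp]: "Tr 0 = 0"
  by (simp add: Tr_def)

lemma Tr_1: "Tr 1 = 1"
proof -
  obtain m where "n = 2 * m + 1" using odd_n oddE by blast
  have "Tr 1 = of_nat n" by (simp add: Tr_def)
  also have "\<dots> = 1" using \<open>n = 2 * m + 1\<close> by simp
  finally show ?thesis .
qed

lemma Tr_eq_0_or_1: "Tr x = 0 \<or> Tr x = 1"
proof -
  have "Tr x ^ 2 = (\<Sum>k<n. x ^ 2 ^ Suc k)"
    unfolding Tr_def by (subst freshmans_dream_sum'[of 2 1]) (simp_all add: CHAR_eq_2 mult.commute flip: power_mult)
  also have "\<dots> = Tr x"
    using sum.lessThan_Suc_shift[of "\<lambda>k. x ^ 2 ^ k" n] by (simp add: Tr_def power_card)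
  finally show ?thesis by (simp add: square_eq_self_iff)
qed

lemma Tr_\<theta>: "Tr (\<theta> x) = Tr x"
proof -
  have "Tr (\<theta> x) = \<theta> (Tr x)" by (simp add: Tr_def \<theta>.hom_sum \<theta>.hom_power)
  then show ?thesis using Tr_eq_0_or_1[of x] by auto
qed

lemma Tr_eq_0_iff: "Tr y = 0 \<longleftrightarrow> (\<exists>t. y = t + \<theta> t)"
proof
  let ?K = "{y. Tr y = 0}" and ?L = "\<lambda>t. t + \<theta> t"
  have "inj_on ?L ?K"
  proof (rule inj_onI)
    fix s t assume "s \<in> ?K" "t \<in> ?K" "?L s = ?L t"
    have "\<theta> (s + t) + (s + t) = ?L s + ?L t" by (simp add: \<theta>.hom_add add_ac)
    then have "\<theta> (s + t) = s + t" using \<open>?L s = ?L t\<close> by (simp add: add_eq_0_iff_eq)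
    moreover have "Tr (s + t) = 0" using \<open>s \<in> ?K\<close> \<open>t \<in> ?K\<close> by (simp add: Tr_add)
    ultimately show "s = t"
      using fixed_point_of_\<theta> Tr_1 by (metis add_eq_0_iff_eq one_neq_zero)
  qed
  moreover have "?L ` ?K \<subseteq> ?K" by (auto simp: Tr_add Tr_\<theta>)
  ultimately have "?L ` ?K = ?K"
    by (intro card_subset_eq) (simp_all add: card_image)
  then show "Tr y = 0 \<Longrightarrow> \<exists>t. y = t + \<theta> t" by blast
qed (auto simp: Tr_add Tr_\<theta>)

text \<open>This is where the oddness of \<open>n\<close> enters: \<open>3\<close> does not divide \<open>2 ^ n - 1\<close>, so the
  field has no primitive cube root of unity.\<close>

lemma \<theta>_eq_inverse_imp_one:
  assumes "v \<noteq> 0" and "\<theta> v = inverse v"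
  shows "v = 1"
proof -
  obtain j where j: "(\<lambda>x::'a. x ^ 2) = \<theta> ^^ j"
    using gal_generator field_aut_square unfolding gal_generator_def by blast
  have "(\<theta> ^^ k) v = (if even k then v else inverse v)" for k
    by (induction k) (simp_all add: assms(2) \<theta>.hom_inverse)
  then have square: "v ^ 2 = (if even j then v else inverse v)"
    using fun_cong[OF j, of v] by simp
  show ?thesis
  proof (cases "even j")
    case True
    then show ?thesis using square assms(1) by (simp add: square_eq_self_iff)
  next
    case False
    then have "v ^ 3 = 1"
      using square assms(1) by (simp add: power2_eq_square power3_eq_cube field_simps)
    obtain m where "n = 2 * m + 1" using odd_n oddE by blast
    obtain q where "(4::nat) ^ m = 3 * q + 1"
    proof (induction m arbitrary: thesis)
      case (Suc m)
      then obtain q where "(4::nat) ^ m = 3 * q + 1" by blast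
      then show ?case using Suc(2)[of "4 * q + 1"] by simp
    qed simp
    then have "(2::nat) ^ n = 3 * (2 * q) + 2"
      using \<open>n = 2 * m + 1\<close> by (simp add: power_add power_mult)
    then have "v ^ 2 ^ n = (v ^ 3) ^ (2 * q) * v ^ 2"
      by (simp only: power_add power_mult)
    then have "v ^ 2 = v"
      using power_card[of v] \<open>v ^ 3 = 1\<close> by simp
    then show ?thesis
      using assms(1) by (simp add: square_eq_self_iff)
  qed
qed

lemma norm_\<theta>_inj:
  assumes "a \<noteq> 0" "b \<noteq> 0" "a * \<theta> a = b * \<theta> b"
  shows "a = b"
proof -
  have "\<theta> (a / b) = inverse (a / b)"
    using assms by (simp add: \<theta>.hom_div field_simps)
  then have "a / b = 1"
    using assms(1,2) by (intro \<theta>_eq_inverse_imp_one) simp_all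
  then show ?thesis using assms(2) by simp
qed

definition \<nu> :: "'a \<Rightarrow> 'a" where "\<nu> a = inverse (a * \<theta> a)"

lemma \<nu>_mult: "a \<noteq> 0 \<Longrightarrow> \<nu> a * (a * \<theta> a) = 1"
  unfolding \<nu>_def by (rule left_inverse) simp

lemma \<nu>_eq_iff: "a \<noteq> 0 \<Longrightarrow> b \<noteq> 0 \<Longrightarrow> \<nu> a = \<nu> b \<longleftrightarrow> a = b"
  unfolding \<nu>_def inverse_eq_iff_eq using norm_\<theta>_inj by blast

lemma bij_\<nu>: "bij_betw \<nu> (UNIV - {0}) (UNIV - {0})"
proof -
  have "inj_on \<nu> (UNIV - {0})" by (rule inj_onI) (simp add: \<nu>_eq_iff)
  moreover have "\<nu> ` (UNIV - {0}) \<subseteq> UNIV - {0}" by (auto simp: \<nu>_def)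
  ultimately have "\<nu> ` (UNIV - {0}) = UNIV - {0}"
    by (intro card_subset_eq) (simp_all add: card_image)
  with \<open>inj_on \<nu> (UNIV - {0})\<close> show ?thesis
    by (simp add: bij_betw_def)
qed

definition \<psi> :: "'a \<Rightarrow> complex" where "\<psi> t = (if Tr t = 0 then 1 else -1)"

lemma \<psi>_add: "\<psi> (x + y) = \<psi> x * \<psi> y"
  using Tr_eq_0_or_1[of x] Tr_eq_0_or_1[of y] by (auto simp: \<psi>_def Tr_add)

lemma \<psi>_0 [simp]: "\<psi> 0 = 1"
  by (simp add: \<psi>_def)

lemma \<psi>_1: "\<psi> 1 = -1"
  by (simp add: \<psi>_def Tr_1)

lemma sum_\<psi>_mult: "(\<Sum>t\<in>UNIV. \<psi> (v * t)) = (if v = 0 then 2 ^ n else 0)"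
proof (cases "v = 0")
  case True
  then show ?thesis by (simp add: \<psi>_def card_UNIV)
next
  case False
  have scale: "(\<Sum>t\<in>UNIV. \<psi> (v * t)) = (\<Sum>t\<in>UNIV. \<psi> t)"
    by (rule sum.reindex_bij_witness[of _ "\<lambda>t. t / v" "\<lambda>t. v * t"]) (use False in auto)
  have "(\<Sum>t\<in>UNIV. \<psi> t) = (\<Sum>t\<in>UNIV. \<psi> (t + 1))"
    by (rule sum.reindex_bij_witness[of _ "\<lambda>t. t + 1" "\<lambda>t. t + 1"]) (simp_all add: add.assoc)
  also have "\<dots> = - (\<Sum>t\<in>UNIV. \<psi> t)"
    by (simp add: \<psi>_add \<psi>_1 sum_negf)
  finally have "(\<Sum>t\<in>UNIV. \<psi> t) = 0"
    by (simp add: eq_neg_iff_add_eq_0)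
  with scale False show ?thesis by simp
qed

lemma sum_\<psi>_\<nu>: "(\<Sum>a\<in>UNIV - {0}. \<psi> (\<nu> a * y)) = (if y = 0 then 2 ^ n - 1 else - 1)"
proof -
  have "(\<Sum>a\<in>UNIV - {0}. \<psi> (\<nu> a * y)) = (\<Sum>v\<in>UNIV - {0}. \<psi> (y * v))"
    using sum.reindex_bij_betw[OF bij_\<nu>, of "\<lambda>v. \<psi> (y * v)"] by (simp add: mult.commute)
  also have "\<dots> = (\<Sum>v\<in>UNIV. \<psi> (y * v)) - \<psi> 0"
    by (simp add: sum_diff1)
  finally show ?thesis by (simp add: sum_\<psi>_mult)
qed

lemma twisted_sum_if_Tr_eq_0:
  assumes "a \<noteq> 0" and "Tr (\<nu> a * w) = 0"
  obtains c where "w = a * \<theta> c + c * \<theta> a"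
proof -
  obtain s where s: "\<nu> a * w = s + \<theta> s" using assms(2) Tr_eq_0_iff by blast
  have "w = (\<nu> a * (a * \<theta> a)) * w"
    using \<nu>_mult[OF assms(1)] by simp
  also have "\<dots> = (a * \<theta> a) * (\<nu> a * w)"
    by (simp only: mult_ac)
  also have "\<dots> = (a * \<theta> a) * (s + \<theta> s)"
    by (simp only: s)
  also have "\<dots> = a * \<theta> (a * s) + (a * s) * \<theta> a"
    by (simp only: \<theta>.hom_mult distrib_left mult_ac add.commute)
  finally show thesis using that by blast
qed

lemma exists_not_0_1:
  assumes "1 < n"
  obtains a :: 'a where "a \<noteq> 0" "a \<noteq> 1"
proof -
  have "card {0, 1 :: 'a} < card (UNIV :: 'a set)"
    using card_UNIV power_strict_increasing_iff[of "2::nat" 1 n] assms by simp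
  then have "\<not> UNIV \<subseteq> {0, 1 :: 'a}"
    using card_mono[of "{0, 1 :: 'a}" UNIV] by auto
  then show thesis using that by blast
qed

text \<open>The values \<open>a \<theta> c + c \<theta> a\<close> cover \<open>ker Tr\<close> (take \<open>a = 1\<close>) and the different
  hyperplane \<open>\<nu> a\<^sub>0 y \<in> ker Tr\<close> (take \<open>a = a\<^sub>0 \<notin> {0, 1}\<close>), so every element is a sum of two of
  them.\<close>

lemma sum_of_two_commutator_terms:
  assumes "1 < n"
  obtains a c a' c' where "y = (a * \<theta> c + c * \<theta> a) + (a' * \<theta> c' + c' * \<theta> a')"
proof -
  let ?T = "{a * \<theta> c + c * \<theta> a | a c. True}"
  obtain a0 :: 'a where a0: "a0 \<noteq> 0" "a0 \<noteq> 1" by (rule exists_not_0_1[OF assms])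
  define u where "u = \<nu> a0"
  have "u \<noteq> 1"
    using \<nu>_eq_iff[OF a0(1), of 1] a0 by (simp add: u_def \<nu>_def)
  have in_T: "w \<in> ?T" if "Tr w + Tr (u * w) = 1" for w
  proof -
    have "Tr (\<nu> 1 * w) = 0 \<or> Tr (\<nu> a0 * w) = 0"
      using that Tr_eq_0_or_1[of w] Tr_eq_0_or_1[of "u * w"] by (auto simp: u_def \<nu>_def)
    then obtain a where "a \<noteq> 0" "Tr (\<nu> a * w) = 0"
      using a0(1) one_neq_zero by blast
    then obtain c where "w = a * \<theta> c + c * \<theta> a"
      by (rule twisted_sum_if_Tr_eq_0)
    then show ?thesis by blast
  qed
  define y0 where "y0 = inverse (1 + u)"
  have "(1 + u) * y0 = 1"
    using \<open>u \<noteq> 1\<close> by (simp add: y0_def add_eq_0_iff_eq)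
  then have y0: "Tr y0 + Tr (u * y0) = 1"
    using Tr_add[of y0 "u * y0"] by (simp add: Tr_1 distrib_right)
  have "\<exists>w1\<in>?T. \<exists>w2\<in>?T. y = w1 + w2"
  proof (cases "Tr y + Tr (u * y) = 1")
    case True
    have "y = y + (0 * \<theta> 0 + 0 * \<theta> 0)" by simp
    then show ?thesis using in_T[OF True] by blast
  next
    case False
    then have "Tr y + Tr (u * y) = 0"
      using Tr_eq_0_or_1[of y] Tr_eq_0_or_1[of "u * y"] by auto
    then have "Tr (y + y0) + Tr (u * (y + y0)) = 1"
      using y0 by (simp add: Tr_add distrib_left add_ac)
    moreover have "y = (y + y0) + y0" by (simp add: add.assoc)
    ultimately show ?thesis using in_T y0 by blast
  qed
  then show thesis using that by blast
qed

end

section \<open>The groups \<open>A(n, \<theta>)\<close>\<close>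

lemma A_grp_carrier [simp]: "carrier (A_grp \<theta>) = UNIV"
  by (simp add: A_grp_def)

lemma A_grp_one [simp]: "\<one>\<^bsub>A_grp \<theta>\<^esub> = (0, 0)"
  by (simp add: A_grp_def)

lemma A_grp_mult [simp]: "p \<otimes>\<^bsub>A_grp \<theta>\<^esub> q = (fst p + fst q, snd p + snd q + fst p * \<theta> (fst q))"
  by (simp add: A_grp_def case_prod_beta)

lemma A_grp_group:
  assumes \<theta>_add: "\<And>x y. \<theta> (x + y) = \<theta> x + \<theta> y"
  shows "group (A_grp \<theta>)"
proof -
  have "\<theta> 0 = 0" using \<theta>_add[of 0 0] by (metis add_0 add_cancel_left_right)
  show ?thesis
  proof (rule groupI)
    fix x :: "'a \<times> 'a"
    show "\<exists>y\<in>carrier (A_grp \<theta>). y \<otimes>\<^bsub>A_grp \<theta>\<^esub> x = \<one>\<^bsub>A_grp \<theta>\<^esub>"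
      by (rule bexI[of _ "(- fst x, fst x * \<theta> (fst x) - snd x)"]) simp_all
  qed (simp_all add: \<theta>_add \<open>\<theta> 0 = 0\<close> algebra_simps)
qed

lemma dvd_4_eq_4_iff: "k dvd (4::nat) \<Longrightarrow> k = 4 \<longleftrightarrow> \<not> k dvd 2"
proof -
  assume "k dvd 4"
  moreover from this have "k \<le> 4" by (rule dvd_imp_le) simp
  moreover have "k \<noteq> 3" using \<open>k dvd 4\<close> by (auto simp: dvd_eq_mod_eq_0)
  ultimately have "k = 1 \<or> k = 2 \<or> k = 4" by (cases "k = 0") auto
  then show ?thesis by auto
qed

lemma sum_UNIV_pair: "(\<Sum>p\<in>UNIV. F p) = (\<Sum>a\<in>UNIV. \<Sum>b\<in>UNIV. F (a, b))"
  by (simp add: sum.cartesian_product)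

context suzuki_A
begin

abbreviation G :: "('a \<times> 'a) monoid" where "G \<equiv> A_grp \<theta>"

abbreviation Z :: "('a \<times> 'a) set" where "Z \<equiv> {0} \<times> UNIV"

sublocale G: finite_group G
  by (intro finite_group.intro finite_group_axioms.intro A_grp_group \<theta>.hom_add) simp

lemma A_inv: "inv\<^bsub>G\<^esub> p = (fst p, snd p + fst p * \<theta> (fst p))"
  by (rule G.inv_equality) (simp_all add: add_ac add_self_left)

lemma A_ord_eq_4_iff: "group.ord G p = 4 \<longleftrightarrow> fst p \<noteq> 0"
proof -
  have square: "p [^]\<^bsub>G\<^esub> (2::nat) = (0, fst p * \<theta> (fst p))"
    by (simp add: numeral_2_eq_2)
  have "p [^]\<^bsub>G\<^esub> (4::nat) = (p [^]\<^bsub>G\<^esub> (2::nat)) [^]\<^bsub>G\<^esub> (2::nat)"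
    using G.nat_pow_pow[of p 2 2] by simp
  also have "\<dots> = \<one>\<^bsub>G\<^esub>"
    by (simp add: square numeral_2_eq_2)
  finally have "group.ord G p dvd 4"
    using G.pow_eq_id[of p 4] by simp
  moreover have "group.ord G p dvd 2 \<longleftrightarrow> fst p = 0"
    using G.pow_eq_id[of p 2] square by simp
  ultimately show ?thesis
    by (simp add: dvd_4_eq_4_iff)
qed

lemma A_conj: "inv\<^bsub>G\<^esub> h \<otimes>\<^bsub>G\<^esub> p \<otimes>\<^bsub>G\<^esub> h = (fst p, snd p + fst h * \<theta> (fst p) + fst p * \<theta> (fst h))"
  by (simp add: A_inv \<theta>.hom_add algebra_simps)

lemma A_commute: "p \<otimes>\<^bsub>G\<^esub> q = q \<otimes>\<^bsub>G\<^esub> p \<otimes>\<^bsub>G\<^esub> (0, fst p * \<theta> (fst q) + fst q * \<theta> (fst p))"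
  by (simp add: algebra_simps)

lemma A_rep_carrier: "is_rep G d \<rho> \<Longrightarrow> \<rho> g \<in> carrier_mat d d"
  unfolding is_rep_def A_grp_carrier by blast

lemma A_rep_mult: "is_rep G d \<rho> \<Longrightarrow> \<rho> (g \<otimes>\<^bsub>G\<^esub> h) = \<rho> g * \<rho> h"
  unfolding is_rep_def A_grp_carrier by blast

lemma rep_commutative_if_trivial_on_Z:
  assumes rep: "is_rep G d \<rho>" and triv: "\<And>b. \<rho> (0, b) = 1\<^sub>m d"
  shows "\<rho> p * \<rho> q = \<rho> q * \<rho> p"
proof -
  let ?c = "(0, fst p * \<theta> (fst q) + fst q * \<theta> (fst p))"
  have "\<rho> p * \<rho> q = \<rho> (q \<otimes>\<^bsub>G\<^esub> p \<otimes>\<^bsub>G\<^esub> ?c)"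
    by (simp only: A_commute[symmetric] A_rep_mult[OF rep])
  also have "\<dots> = \<rho> q * \<rho> p * 1\<^sub>m d"
    by (simp only: A_rep_mult[OF rep] triv)
  also have "\<dots> = \<rho> q * \<rho> p"
    by (rule right_mult_one_mat, rule mult_carrier_mat[OF A_rep_carrier[OF rep] A_rep_carrier[OF rep]])
  finally show ?thesis .
qed

lemma rep_trivial_on_Z_if_commutative:
  assumes "1 < n" and rep: "is_rep G d \<rho>" and comm: "\<And>p q. \<rho> p * \<rho> q = \<rho> q * \<rho> p"
  shows "\<rho> (0, y) = 1\<^sub>m d"
proof -
  interpret finite_group_rep G d \<rho>
    by (intro finite_group_rep.intro finite_group_rep_axioms.intro G.finite_group_axioms rep)
  have commutator: "\<rho> (0, a * \<theta> c + c * \<theta> a) = 1\<^sub>m d" for a c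
  proof (rule rep_cancel_left)
    let ?p = "(a, 0)" and ?q = "(c, 0)"
    have "\<rho> (?q \<otimes>\<^bsub>G\<^esub> ?p) * \<rho> (0, a * \<theta> c + c * \<theta> a) = \<rho> (?p \<otimes>\<^bsub>G\<^esub> ?q)"
      using A_commute[of ?p ?q] by (simp only: A_rep_mult[OF rep] fst_conv)
    also have "\<dots> = \<rho> (?q \<otimes>\<^bsub>G\<^esub> ?p)"
      by (simp only: A_rep_mult[OF rep] comm)
    finally show "\<rho> (?q \<otimes>\<^bsub>G\<^esub> ?p) * \<rho> (0, a * \<theta> c + c * \<theta> a) = \<rho> (?q \<otimes>\<^bsub>G\<^esub> ?p) * 1\<^sub>m d"
      by (simp only: right_mult_one_mat[OF A_rep_carrier[OF rep]])
  qed (simp_all add: A_rep_carrier[OF rep])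
  obtain a c a' c' where y: "y = (a * \<theta> c + c * \<theta> a) + (a' * \<theta> c' + c' * \<theta> a')"
    by (rule sum_of_two_commutator_terms[OF \<open>1 < n\<close>])
  have "\<rho> (0, y) = \<rho> ((0, a * \<theta> c + c * \<theta> a) \<otimes>\<^bsub>G\<^esub> (0, a' * \<theta> c' + c' * \<theta> a'))"
    by (simp add: y)
  also have "\<dots> = 1\<^sub>m d"
    by (simp only: A_rep_mult[OF rep] commutator) simp
  finally show ?thesis .
qed

lemma linear_char_if_trivial_on_Z:
  assumes irr: "irreducible_rep G d \<rho>" and \<chi>: "\<forall>g\<in>carrier G. \<chi> g = mat_trace (\<rho> g)"
    and triv: "\<And>b. \<rho> (0, b) = 1\<^sub>m d"
  shows "linear_char G \<chi>"
proof -
  have rep: "is_rep G d \<rho>" using irr by (simp add: irreducible_rep_def)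
  have "d = 1"
    using irreducible_commutative_dim_one[OF irr] rep_commutative_if_trivial_on_Z[OF rep triv]
    by blast
  then show ?thesis using rep \<chi> unfolding linear_char_def by blast
qed

end

section \<open>The connection set\<close>

locale suzuki_A_cayley = suzuki_A +
  fixes C :: "('a \<times> 'a) set"
  assumes C_ord: "\<forall>g\<in>C. group.ord (A_grp \<theta>) g = 4"
    and C_union: "\<forall>g\<in>C. conj_class (A_grp \<theta>) g \<subseteq> C"
    and C_choice: "\<forall>g\<in>carrier (A_grp \<theta>). group.ord (A_grp \<theta>) g = 4 \<longrightarrow>
        ((conj_class (A_grp \<theta>) g \<subseteq> C) \<longleftrightarrow>
         \<not> ((\<lambda>y. inv\<^bsub>A_grp \<theta>\<^esub> y) ` conj_class (A_grp \<theta>) g \<subseteq> C))"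
begin

lemma C_fst_nonzero: "g \<in> C \<Longrightarrow> fst g \<noteq> 0"
  using C_ord A_ord_eq_4_iff by blast

lemma mem_C_conj_iff: "(a, b + c * \<theta> a + a * \<theta> c) \<in> C \<longleftrightarrow> (a, b) \<in> C"
proof -
  have shift: "(a, b + c * \<theta> a + a * \<theta> c) \<in> C" if "(a, b) \<in> C" for a b
  proof -
    have "(a, b + c * \<theta> a + a * \<theta> c) = inv\<^bsub>G\<^esub> (c, 0) \<otimes>\<^bsub>G\<^esub> (a, b) \<otimes>\<^bsub>G\<^esub> (c, 0)"
      by (simp only: A_conj fst_conv snd_conv)
    then have "(a, b + c * \<theta> a + a * \<theta> c) \<in> conj_class G (a, b)"
      unfolding conj_class_def A_grp_carrier by blast
    then show ?thesis using C_union that by blast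
  qed
  show ?thesis
  proof
    assume "(a, b + c * \<theta> a + a * \<theta> c) \<in> C"
    then have "(a, b + c * \<theta> a + a * \<theta> c + c * \<theta> a + a * \<theta> c) \<in> C" by (rule shift)
    then show "(a, b) \<in> C" by (simp add: add_ac add_self_left)
  qed (rule shift)
qed

lemma mem_C_iff_inv_notin:
  assumes "fst g \<noteq> 0"
  shows "g \<in> C \<longleftrightarrow> inv\<^bsub>G\<^esub> g \<notin> C"
proof -
  have "conj_class G x \<subseteq> C \<longleftrightarrow> x \<in> C" for x
    using G.conj_class_subset_iff C_union by simp
  moreover have "(\<lambda>y. inv\<^bsub>G\<^esub> y) ` conj_class G g = conj_class G (inv\<^bsub>G\<^esub> g)"
    by (rule G.image_inv_conj_class) simp
  ultimately show ?thesis
    using C_choice assms A_ord_eq_4_iff by (metis UNIV_I A_grp_carrier)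
qed

text \<open>The coefficient function of \<open>C - C\<^sup>(\<^sup>-\<^sup>1\<^sup>)\<close> in the group algebra.\<close>

definition skewC :: "'a \<times> 'a \<Rightarrow> complex" where
  "skewC g = (if g \<in> C then 1 else if inv\<^bsub>G\<^esub> g \<in> C then -1 else 0)"

lemma skewC_fst_zero:
  assumes "fst g = 0"
  shows "skewC g = 0"
proof -
  have "fst (inv\<^bsub>G\<^esub> g) = 0" using assms by (simp add: A_inv)
  then have "g \<notin> C" "inv\<^bsub>G\<^esub> g \<notin> C"
    using assms C_fst_nonzero by blast+
  then show ?thesis by (simp add: skewC_def)
qed

lemma skewC_fst_nonzero: "fst g \<noteq> 0 \<Longrightarrow> skewC g = (if g \<in> C then 1 else -1)"
  unfolding skewC_def using mem_C_iff_inv_notin[of g] by auto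

lemma skewC_inv: "skewC (inv\<^bsub>G\<^esub> g) = - skewC g"
proof (cases "fst g = 0")
  case True
  then show ?thesis by (simp add: skewC_fst_zero A_inv)
next
  case False
  then show ?thesis
    using mem_C_iff_inv_notin[of g] by (simp add: skewC_def)
qed

lemma indicator_C_eq: "indicator C g = (1 - indicator Z g + skewC g) / (2::complex)"
proof (cases "fst g = 0")
  case True
  then have "g \<notin> C" using C_fst_nonzero by blast
  then show ?thesis using True by (simp add: skewC_fst_zero indicator_def mem_Times_iff)
next
  case False
  then show ?thesis by (simp add: skewC_fst_nonzero indicator_def mem_Times_iff)
qed

lemma mem_C_commute: "p \<otimes>\<^bsub>G\<^esub> q \<in> C \<longleftrightarrow> q \<otimes>\<^bsub>G\<^esub> p \<in> C"
proof -
  let ?a = "fst p + fst q" and ?b = "snd q + snd p + fst q * \<theta> (fst p)"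
  have "p \<otimes>\<^bsub>G\<^esub> q = (?a, ?b + fst p * \<theta> ?a + ?a * \<theta> (fst p))"
    by (simp add: \<theta>.hom_add algebra_simps add_self_left)
  moreover have "q \<otimes>\<^bsub>G\<^esub> p = (?a, ?b)"
    by (simp add: add.commute)
  ultimately show ?thesis by (simp only: mem_C_conj_iff)
qed

lemma skewC_commute: "skewC (p \<otimes>\<^bsub>G\<^esub> q) = skewC (q \<otimes>\<^bsub>G\<^esub> p)"
proof -
  have "inv\<^bsub>G\<^esub> (p \<otimes>\<^bsub>G\<^esub> q) \<in> C \<longleftrightarrow> inv\<^bsub>G\<^esub> (q \<otimes>\<^bsub>G\<^esub> p) \<in> C"
    using mem_C_commute[of "inv\<^bsub>G\<^esub> q" "inv\<^bsub>G\<^esub> p"] by (simp only: G.inv_mult_group UNIV_I A_grp_carrier)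
  then show ?thesis
    unfolding skewC_def using mem_C_commute[of p q] by (simp only:)
qed

lemma mem_C_shift_iff:
  assumes "a \<noteq> 0" and "Tr (\<nu> a * s) = 0"
  shows "(a, b + s) \<in> C \<longleftrightarrow> (a, b) \<in> C"
proof -
  obtain c where "s = a * \<theta> c + c * \<theta> a"
    by (rule twisted_sum_if_Tr_eq_0[OF assms])
  then show ?thesis
    using mem_C_conj_iff[of a b c] by (simp add: add_ac)
qed

lemma skewC_eq:
  assumes "a \<noteq> 0"
  shows "skewC (a, b) = skewC (a, 0) * \<psi> (\<nu> a * b)"
proof (cases "Tr (\<nu> a * b) = 0")
  case True
  then have "(a, 0 + b) \<in> C \<longleftrightarrow> (a, 0) \<in> C" by (rule mem_C_shift_iff[OF assms])
  then show ?thesis using True assms by (simp add: skewC_fst_nonzero \<psi>_def)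
next
  case False
  then have "Tr (\<nu> a * b) = 1" using Tr_eq_0_or_1 by blast
  then have "Tr (\<nu> a * (b + a * \<theta> a)) = 0"
    using \<nu>_mult[OF assms] Tr_1 by (simp add: distrib_left Tr_add)
  then have "(a, 0 + (b + a * \<theta> a)) \<in> C \<longleftrightarrow> (a, 0) \<in> C" by (rule mem_C_shift_iff[OF assms])
  moreover have "(a, b + a * \<theta> a) \<in> C \<longleftrightarrow> (a, b) \<notin> C"
    using mem_C_iff_inv_notin[of "(a, b)"] assms by (simp add: A_inv)
  ultimately show ?thesis
    using \<open>Tr (\<nu> a * b) = 1\<close> assms by (auto simp: skewC_fst_nonzero \<psi>_def)
qed

lemma sum_skewC_fibre: "(\<Sum>b\<in>UNIV. skewC (a, b)) = 0"
proof (cases "a = 0")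
  case True
  then show ?thesis by (simp add: skewC_fst_zero)
next
  case False
  then have "(\<Sum>b\<in>UNIV. skewC (a, b)) = skewC (a, 0) * (\<Sum>b\<in>UNIV. \<psi> (\<nu> a * b))"
    unfolding sum_distrib_left by (intro sum.cong refl skewC_eq)
  also have "\<dots> = 0"
    using False by (simp add: sum_\<psi>_mult \<nu>_def)
  finally show ?thesis .
qed

lemma sum_skewC_shift:
  "(\<Sum>b\<in>UNIV. skewC (a, b) * skewC (a + x, b + c)) = (if a \<noteq> 0 \<and> x = 0 then 2 ^ n * \<psi> (\<nu> a * c) else 0)"
proof -
  consider "a = 0" | "a \<noteq> 0" "a + x = 0" | "a \<noteq> 0" "a + x \<noteq> 0" by blast
  then show ?thesis
  proof cases
    case 1
    then show ?thesis by (simp add: skewC_fst_zero)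
  next
    case 2
    then show ?thesis by (simp add: skewC_fst_zero add_eq_0_iff_eq)
  next
    case 3
    let ?const = "skewC (a, 0) * skewC (a + x, 0) * \<psi> (\<nu> (a + x) * c)"
    have "(\<Sum>b\<in>UNIV. skewC (a, b) * skewC (a + x, b + c))
        = (\<Sum>b\<in>UNIV. ?const * \<psi> ((\<nu> a + \<nu> (a + x)) * b))"
    proof (rule sum.cong[OF refl])
      fix b
      show "skewC (a, b) * skewC (a + x, b + c) = ?const * \<psi> ((\<nu> a + \<nu> (a + x)) * b)"
        using skewC_eq[OF 3(1), of b] skewC_eq[OF 3(2), of "b + c"]
        by (simp add: distrib_left distrib_right \<psi>_add mult_ac)
    qed
    also have "\<dots> = ?const * (if \<nu> a + \<nu> (a + x) = 0 then 2 ^ n else 0)"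
      by (simp add: sum_distrib_left flip: sum_\<psi>_mult)
    also have "\<nu> a + \<nu> (a + x) = 0 \<longleftrightarrow> x = 0"
      using 3 by (auto simp: add_eq_0_iff_eq \<nu>_eq_iff)
    finally show ?thesis
      using 3 by (simp add: skewC_fst_nonzero)
  qed
qed

lemma convolution_A:
  "convolution G f h (x, y) = (\<Sum>a\<in>UNIV. \<Sum>b\<in>UNIV. f (a, b) * h (a + x, b + (a * \<theta> a + y + a * \<theta> x)))"
  unfolding convolution_def A_grp_carrier sum_UNIV_pair by (simp add: A_inv add.assoc)

lemma convolution_skewC_skewC:
  "convolution G skewC skewC k = 2 ^ n * indicator Z k + - ((2 ^ n) ^ 2) * indicator {(0, 0)} k"
proof -
  obtain x y where k: "k = (x, y)" by fastforce
  have "convolution G skewC skewC k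
      = (\<Sum>a\<in>UNIV. if a \<noteq> 0 \<and> x = 0 then 2 ^ n * \<psi> (\<nu> a * (a * \<theta> a + y + a * \<theta> x)) else 0)"
    unfolding k convolution_A sum_skewC_shift ..
  also have "\<dots> = (if x = 0 then - (2 ^ n) * (\<Sum>a\<in>UNIV - {0}. \<psi> (\<nu> a * y)) else 0)"
  proof (cases "x = 0")
    case True
    have "\<psi> (\<nu> a * (a * \<theta> a + y)) = - \<psi> (\<nu> a * y)" if "a \<noteq> 0" for a
      using \<nu>_mult[OF that] by (simp add: distrib_left \<psi>_add \<psi>_1)
    then show ?thesis
      using True by (simp add: sum.If_cases Collect_neg_eq Compl_eq_Diff_UNIV sum_distrib_left)
  qed simp
  also have "\<dots> = 2 ^ n * indicator Z k + - ((2 ^ n) ^ 2) * indicator {(0, 0)} k"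
    unfolding sum_\<psi>_\<nu> by (simp add: k indicator_def mem_Times_iff algebra_simps power2_eq_square)
  finally show ?thesis .
qed

lemma convolution_Z_skewC: "convolution G (indicator Z) skewC k = 0"
proof -
  obtain x y where k: "k = (x, y)" by fastforce
  have "convolution G (indicator Z) skewC k = (\<Sum>b\<in>UNIV. skewC (x, b + y))"
    unfolding k convolution_A by (simp add: indicator_def mem_Times_iff if_distrib cong: if_cong)
  also have "\<dots> = (\<Sum>b\<in>UNIV. skewC (x, b))"
    by (rule sum.reindex_bij_witness[of _ "\<lambda>b. b + y" "\<lambda>b. b + y"]) (simp_all add: add.assoc)
  finally show ?thesis by (simp add: sum_skewC_fibre)
qed

lemma convolution_skewC_cube:
  "convolution G (convolution G skewC skewC) skewC k = - ((2 ^ n) ^ 2) * skewC k"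
proof -
  have "convolution G skewC skewC
      = (\<lambda>k. 2 ^ n * indicator Z k + - ((2 ^ n) ^ 2) * indicator {(0, 0)} k)"
    using convolution_skewC_skewC by blast
  moreover have "convolution G (indicator {(0, 0)}) skewC k = skewC k"
    using G.convolution_indicator_one[of k skewC] by simp
  ultimately show ?thesis
    by (simp only: G.convolution_linear_left convolution_Z_skewC) simp
qed

lemma skew_adj_eq: "skew_adj G C u v = skewC (v \<otimes>\<^bsub>G\<^esub> inv\<^bsub>G\<^esub> u)"
proof -
  have arc: "cay_arc G C u v \<longleftrightarrow> v \<otimes>\<^bsub>G\<^esub> inv\<^bsub>G\<^esub> u \<in> C" for u v
  proof -
    have "v = c \<otimes>\<^bsub>G\<^esub> u \<longleftrightarrow> c = v \<otimes>\<^bsub>G\<^esub> inv\<^bsub>G\<^esub> u" for c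
      using G.inv_solve_right[of c v u] by (simp del: A_grp_mult)
    then show ?thesis unfolding cay_arc_def by (auto simp del: A_grp_mult)
  qed
  have "inv\<^bsub>G\<^esub> (v \<otimes>\<^bsub>G\<^esub> inv\<^bsub>G\<^esub> u) = u \<otimes>\<^bsub>G\<^esub> inv\<^bsub>G\<^esub> v"
    by (simp add: G.inv_mult_group del: A_grp_mult)
  then show ?thesis
    unfolding skew_adj_def skewC_def arc by (simp del: A_grp_mult)
qed

lemma skew_adj_sum: "(\<Sum>v\<in>carrier G. skew_adj G C u v * f v) = - convolution G skewC f u"
proof -
  have "(\<Sum>v\<in>carrier G. skew_adj G C u v * f v) = convolution G (\<lambda>x. skewC (inv\<^bsub>G\<^esub> x)) f u"
    unfolding skew_adj_eq by (rule G.sum_right_translate_eq_convolution) simp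
  also have "\<dots> = - convolution G skewC f u"
    by (simp add: skewC_inv convolution_def sum_negf)
  finally show ?thesis .
qed

lemma skew_adj_eigenvalue:
  assumes "is_eigenvalue (carrier G) (skew_adj G C) \<mu>"
  shows "\<mu> \<in> {0, 2 ^ n * \<i>, - (2 ^ n * \<i>)}"
proof -
  obtain f u where "f u \<noteq> 0" and eigen: "\<And>w. (\<Sum>v\<in>carrier G. skew_adj G C w v * f v) = \<mu> * f w"
    using assms unfolding is_eigenvalue_def by auto
  define c where "c = - \<mu>"
  have "convolution G skewC f w = c * f w" for w
    using eigen[of w] skew_adj_sum[of w f] by (simp add: c_def equation_minus_iff)
  then have Kf: "convolution G skewC f = (\<lambda>w. c * f w)" ..
  have cube: "convolution G (convolution G skewC skewC) skewC = (\<lambda>k. - ((2 ^ n) ^ 2) * skewC k)"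
    using convolution_skewC_cube by blast
  have "c * (c * (c * f u)) = convolution G skewC (convolution G skewC (convolution G skewC f)) u"
    by (simp add: Kf G.convolution_scale_right)
  also have "\<dots> = convolution G (convolution G (convolution G skewC skewC) skewC) f u"
    by (simp add: G.convolution_assoc)
  also have "\<dots> = - ((2 ^ n) ^ 2) * (c * f u)"
    by (simp only: cube G.convolution_scale_left) (simp add: Kf)
  finally have "(c * (c * c + (2 ^ n) ^ 2)) * f u = 0"
    by (simp add: algebra_simps)
  then have "c = 0 \<or> c * c = - (2 ^ n * 2 ^ n)"
    using \<open>f u \<noteq> 0\<close> by (simp add: add_eq_0_iff2 power2_eq_square)
  then show ?thesis
    using complex_square_eq_neg_square by (auto simp: c_def)
qed

end

section \<open>Characters\<close>

text \<open>An irreducible representation makes the class functions \<open>1\<close>, \<open>Z\<close> and \<open>skewC\<close> act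
  by scalars \<open>m1\<close>, \<open>mZ\<close>, \<open>mC\<close>; for degree one this holds for every representation.\<close>

locale suzuki_A_scalar_rep = suzuki_A_cayley \<theta> n C + finite_group_rep "A_grp \<theta>" d \<rho>
  for \<theta> :: "'a::{field,finite} \<Rightarrow> 'a" and n C d \<rho> +
  fixes m1 mZ mC :: complex
  assumes dim_pos: "0 < d"
    and rep_sum_1: "rep_sum (A_grp \<theta>) d \<rho> (\<lambda>_. 1) = m1 \<cdot>\<^sub>m 1\<^sub>m d"
    and rep_sum_Z: "rep_sum (A_grp \<theta>) d \<rho> (indicator Z) = mZ \<cdot>\<^sub>m 1\<^sub>m d"
    and rep_sum_skewC: "rep_sum (A_grp \<theta>) d \<rho> skewC = mC \<cdot>\<^sub>m 1\<^sub>m d"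
begin

lemma trace_rep_one: "mat_trace (\<rho> (0, 0)) = of_nat d"
  using rep_one by (simp add: mat_trace_def)

lemma char_sum_C: "char_sum (\<lambda>g. mat_trace (\<rho> g)) C = of_nat d * (m1 - mZ + mC) / 2"
proof -
  have "char_sum (\<lambda>g. mat_trace (\<rho> g)) C = (\<Sum>g\<in>UNIV. indicator C g * mat_trace (\<rho> g))"
    by (simp add: char_sum_def)
  also have "\<dots> = (\<Sum>g\<in>UNIV. (mat_trace (\<rho> g) - indicator Z g * mat_trace (\<rho> g)
      + skewC g * mat_trace (\<rho> g)) / 2)"
    by (rule sum.cong[OF refl]) (simp add: indicator_C_eq field_simps)
  also have "\<dots> = ((\<Sum>g\<in>UNIV. mat_trace (\<rho> g)) - (\<Sum>g\<in>UNIV. indicator Z g * mat_trace (\<rho> g))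
      + (\<Sum>g\<in>UNIV. skewC g * mat_trace (\<rho> g))) / 2"
    by (simp only: sum_divide_distrib[symmetric] sum.distrib sum_subtractf)
  also have "\<dots> = of_nat d * (m1 - mZ + mC) / 2"
    using trace_rep_sum_scalar[OF rep_sum_1] trace_rep_sum_scalar[OF rep_sum_Z]
      trace_rep_sum_scalar[OF rep_sum_skewC]
    by (simp add: algebra_simps del: sum_indicator_mult)
  finally show ?thesis .
qed

lemma trace_Z: "(\<Sum>g\<in>Z. mat_trace (\<rho> g)) = of_nat d * mZ"
  using trace_rep_sum_scalar[OF rep_sum_Z] by simp

lemma mC_square: "mC * mC = 2 ^ n * mZ - (2 ^ n) ^ 2"
proof -
  have "of_nat d * (mC * mC) = (\<Sum>g\<in>UNIV. convolution G skewC skewC g * mat_trace (\<rho> g))"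
    using trace_rep_sum_scalar[OF rep_sum_convolution_scalar[OF rep_sum_skewC rep_sum_skewC]] by simp
  also have "\<dots> = (\<Sum>g\<in>UNIV. 2 ^ n * (indicator Z g * mat_trace (\<rho> g))
      + - ((2 ^ n) ^ 2) * (indicator {(0, 0)} g * mat_trace (\<rho> g)))"
    by (rule sum.cong[OF refl]) (simp add: convolution_skewC_skewC algebra_simps)
  also have "\<dots> = 2 ^ n * (\<Sum>g\<in>Z. mat_trace (\<rho> g)) - (2 ^ n) ^ 2 * mat_trace (\<rho> (0, 0))"
    by (simp add: sum_subtractf flip: sum_distrib_left)
  also have "\<dots> = of_nat d * (2 ^ n * mZ - (2 ^ n) ^ 2)"
    by (simp add: trace_Z trace_rep_one algebra_simps)
  finally show ?thesis using dim_pos by simp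
qed

lemma trivial_on_Z_if_mZ_nonzero: "mZ \<noteq> 0 \<Longrightarrow> \<rho> (0, b) = 1\<^sub>m d"
  by (rule rep_trivial_if_invariant[OF rep_sum_Z]) (simp_all add: A_inv indicator_def mem_Times_iff)

lemma trivial_if_m1_nonzero: "m1 \<noteq> 0 \<Longrightarrow> \<rho> g = 1\<^sub>m d"
  by (rule rep_trivial_if_invariant[OF rep_sum_1]) simp_all

lemma mZ_if_trivial_on_Z:
  assumes "\<And>b. \<rho> (0, b) = 1\<^sub>m d"
  shows "mZ = 2 ^ n"
proof -
  have "of_nat d * mZ = (\<Sum>g\<in>Z. mat_trace (\<rho> g))"
    by (simp add: trace_Z)
  also have "\<dots> = (\<Sum>b\<in>UNIV. mat_trace (\<rho> (0, b)))"
    by (rule sum.reindex_bij_witness[of _ "\<lambda>b. (0, b)" snd]) auto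
  also have "\<dots> = 2 ^ n * of_nat d"
    by (simp add: assms mat_trace_def card_UNIV)
  finally show ?thesis using dim_pos by (simp add: mult.commute)
qed

lemma m1_if_trivial:
  assumes "\<And>g. \<rho> g = 1\<^sub>m d"
  shows "m1 = (2 ^ n) ^ 2"
proof -
  have "of_nat d * m1 = (\<Sum>g\<in>UNIV. mat_trace (\<rho> g))"
    using trace_rep_sum_scalar[OF rep_sum_1] by simp
  also have "\<dots> = (\<Sum>a\<in>UNIV. \<Sum>b\<in>UNIV. mat_trace (\<rho> (a, b)))"
    by (rule sum_UNIV_pair)
  also have "\<dots> = (2 ^ n) ^ 2 * of_nat d"
    by (simp add: assms mat_trace_def card_UNIV power2_eq_square)
  finally show ?thesis using dim_pos by (simp add: mult.commute)
qed

end

context suzuki_A_cayley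
begin

lemma linear_char_sum_real:
  assumes "1 < n" and "linear_char G lam"
  shows "char_sum lam C - cnj (char_sum lam C) = 0"
proof -
  obtain \<rho> where rep: "is_rep G 1 \<rho>" and lam: "\<forall>g\<in>carrier G. lam g = mat_trace (\<rho> g)"
    using assms(2) unfolding linear_char_def by blast
  interpret \<rho>: finite_group_rep G 1 \<rho>
    by (intro finite_group_rep.intro finite_group_rep_axioms.intro G.finite_group_axioms rep)
  define m where "m f = rep_sum G 1 \<rho> f $$ (0, 0)" for f
  have scalar: "rep_sum G 1 \<rho> f = m f \<cdot>\<^sub>m 1\<^sub>m 1" for f
    unfolding m_def by (rule mat_1x1_scalar) (rule \<rho>.rep_sum_carrier)
  interpret suzuki_A_scalar_rep \<theta> n C 1 \<rho> "m (\<lambda>_. 1)" "m (indicator Z)" "m skewC"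
    by unfold_locales (simp_all only: scalar zero_less_one)
  have "\<rho> (0, b) = 1\<^sub>m 1" for b
    by (rule rep_trivial_on_Z_if_commutative[OF assms(1) rep])
       (intro mat_1x1_mult_commute A_rep_carrier[OF rep])
  then have "m (indicator Z) = 2 ^ n" by (rule mZ_if_trivial_on_Z)
  then have "m skewC = 0" using mC_square by (simp add: power2_eq_square)
  moreover have "char_sum lam C = char_sum (\<lambda>g. mat_trace (\<rho> g)) C"
    using lam unfolding char_sum_def A_grp_carrier by (intro sum.cong) blast+
  ultimately have char_sum_lam: "char_sum lam C = (m (\<lambda>_. 1) - 2 ^ n) / 2"
    using \<open>m (indicator Z) = 2 ^ n\<close> by (simp add: char_sum_C)
  have "m (\<lambda>_. 1) \<in> {0, (2 ^ n) ^ 2}"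
    using trivial_if_m1_nonzero m1_if_trivial by blast
  then show ?thesis
    unfolding char_sum_lam by auto
qed

lemma nonlinear_char_sum:
  assumes "irr_char G \<chi>" and "\<not> linear_char G \<chi>"
  shows "(char_sum \<chi> C - cnj (char_sum \<chi> C)) / \<chi> \<one>\<^bsub>G\<^esub> \<in> {2 ^ n * \<i>, - (2 ^ n * \<i>)}"
proof -
  obtain d \<rho> where irr: "irreducible_rep G d \<rho>" and \<chi>: "\<forall>g\<in>carrier G. \<chi> g = mat_trace (\<rho> g)"
    using assms(1) unfolding irr_char_def by blast
  then have rep: "is_rep G d \<rho>" and "0 < d" by (simp_all add: irreducible_rep_def)
  interpret \<rho>: finite_group_rep G d \<rho>
    by (intro finite_group_rep.intro finite_group_rep_axioms.intro G.finite_group_axioms rep)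
  have scalar: "\<exists>m. rep_sum G d \<rho> f = m \<cdot>\<^sub>m 1\<^sub>m d"
    if "\<And>p q. f (p \<otimes>\<^bsub>G\<^esub> q) = f (q \<otimes>\<^bsub>G\<^esub> p)" for f
    using schur_scalar[OF irr \<rho>.rep_sum_carrier] \<rho>.rep_sum_class_function_commute that by blast
  obtain m1 where m1: "rep_sum G d \<rho> (\<lambda>_. 1) = m1 \<cdot>\<^sub>m 1\<^sub>m d"
    using scalar[of "\<lambda>_. 1"] by blast
  obtain mZ where mZ: "rep_sum G d \<rho> (indicator Z) = mZ \<cdot>\<^sub>m 1\<^sub>m d"
    using scalar[of "indicator Z"] by (auto simp: indicator_def mem_Times_iff add.commute)
  obtain mC where mC: "rep_sum G d \<rho> skewC = mC \<cdot>\<^sub>m 1\<^sub>m d"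
    using scalar[of skewC] skewC_commute by blast
  interpret suzuki_A_scalar_rep \<theta> n C d \<rho> m1 mZ mC
    by unfold_locales (fact \<open>0 < d\<close> m1 mZ mC)+
  have nontrivial: "\<not> (\<forall>b. \<rho> (0, b) = 1\<^sub>m d)"
    using linear_char_if_trivial_on_Z[OF irr \<chi>] assms(2) by blast
  then have "mZ = 0" and "m1 = 0"
    using trivial_on_Z_if_mZ_nonzero trivial_if_m1_nonzero by blast+
  then have mC_values: "mC = 2 ^ n * \<i> \<or> mC = - (2 ^ n * \<i>)"
    using mC_square complex_square_eq_neg_square by (simp add: power2_eq_square)
  have \<chi>_eq: "\<chi> g = mat_trace (\<rho> g)" for g
    using \<chi> unfolding A_grp_carrier by blast
  then have one: "\<chi> \<one>\<^bsub>G\<^esub> = of_nat d" and char_sum_\<chi>: "char_sum \<chi> C = of_nat d * mC / 2"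
    using trace_rep_one char_sum_C \<open>mZ = 0\<close> \<open>m1 = 0\<close> by (simp_all add: char_sum_def)
  have "cnj mC = - mC" using mC_values by auto
  then have "(char_sum \<chi> C - cnj (char_sum \<chi> C)) / \<chi> \<one>\<^bsub>G\<^esub> = mC"
    unfolding one char_sum_\<chi> using \<open>0 < d\<close> by (simp add: field_simps)
  then show ?thesis using mC_values by simp
qed

end

theorem mainTheorem14:
  fixes \<theta> :: "'a::{field,finite} \<Rightarrow> 'a" and n :: nat and C :: "('a \<times> 'a) set"
  assumes card: "card (UNIV :: 'a set) = 2 ^ n"
    and n_odd: "odd n" and n_ge: "n \<ge> 3"
    and gen: "gal_generator \<theta>"
    and C_ord: "\<forall>g\<in>C. group.ord (A_grp \<theta>) g = 4"
    and C_union: "\<forall>g\<in>C. conj_class (A_grp \<theta>) g \<subseteq> C"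
    and C_choice: "\<forall>g\<in>carrier (A_grp \<theta>). group.ord (A_grp \<theta>) g = 4 \<longrightarrow>
        ((conj_class (A_grp \<theta>) g \<subseteq> C) \<longleftrightarrow>
         \<not> ((\<lambda>y. inv\<^bsub>A_grp \<theta>\<^esub> y) ` conj_class (A_grp \<theta>) g \<subseteq> C))"
  shows "(\<forall>lam. linear_char (A_grp \<theta>) lam \<longrightarrow>
            char_sum lam C - cnj (char_sum lam C) = 0)
       \<and> (\<forall>\<chi>. irr_char (A_grp \<theta>) \<chi> \<and> \<not> linear_char (A_grp \<theta>) \<chi> \<longrightarrow>
            (char_sum \<chi> C - cnj (char_sum \<chi> C)) / \<chi> \<one>\<^bsub>A_grp \<theta>\<^esub>
              \<in> {2 ^ n * \<i>, - (2 ^ n * \<i>)})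
       \<and> (\<forall>\<mu>. is_eigenvalue (carrier (A_grp \<theta>)) (skew_adj (A_grp \<theta>) C) \<mu> \<longrightarrow>
            \<mu> \<in> {0, 2 ^ n * \<i>, - (2 ^ n * \<i>)})"
proof -
  interpret suzuki_A_cayley \<theta> n C
    by unfold_locales (fact assms)+
  have "1 < n" using n_ge by simp
  then show ?thesis
    using linear_char_sum_real nonlinear_char_sum skew_adj_eigenvalue by blast
qed

end
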